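(* Let $K$ be a number field, let $X\subseteq M_d(K)$ be closed in the linear Zariski topology, and let $\mathcal S=\langle X\rangle$. Let $A\in\mathcal S$ be completely pseudo-regular and $B\in[A]_{\mathcal S}$. (1) There exist completely pseudo-regular $C,D\in[A]_{\mathcal S}$ such that $B=E(D)B$ and $B=BE(C)$. (2) Suppose $B=B_1B_2$ with $B_1,B_2\in\mathcal S$. Then there exists a completely pseudo-regular element $C\in[A]_{\mathcal S}$ such that $B_1B_2=B_1E(C)B_2$.
   Context: The linear Zariski topology on $M_d(K)$ has as closed sets the finite unions of vector subspaces; $\langle X\rangle$ is the subsemigroup of $M_d(K)$ generated by $X$. A matrix $C$ is completely pseudo-regular if it lies in a subgroup of the multiplicative semigroup $M_d(K)$ (equivalently $\operatorname{im} C\cap\ker C=0$); then $E(C)$ denotes the unique idempotent matrix with $\operatorname{im}E(C)=\operatorname{im}C$ and $\ker E(C)=\ker C$ (the identity of any subgroup containing $C$). For $P,Q\in M_d(K)$ write $P\parallel Q$ if $\operatorname{im}P=\operatorname{im}Q$ and $\ker P=\ker Q$. For $P,Q\in\mathcal S$, write $P\sim_{\mathcal S}Q$ if there exist $C,D,C',D'\in\mathcal S\cup\{I\}$ with $Q\parallel DPC$ and $P\parallel D'QC'$; this is an equivalence relation on $\mathcal S$, and $[P]_{\mathcal S}$ denotes the class of $P$. *)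

theory Defs
  imports "HOL-Analysis.Finite_Cartesian_Product"
begin

text \<open>A number field, as a field of characteristic 0 which is finite-dimensional over its
  prime field (the rationals): every element is a rational linear combination of a fixed
  finite set of elements.\<close>
definition number_field :: "'a::field_char_0 itself \<Rightarrow> bool" where
  "number_field _ \<longleftrightarrow>
     (\<exists>B::'a set. finite B \<and> (\<forall>x::'a. \<exists>c::'a \<Rightarrow> rat. x = (\<Sum>b\<in>B. of_rat (c b) * b)))"

definition msmult :: "'a::semiring_1 \<Rightarrow> 'a^'n^'n \<Rightarrow> 'a^'n^'n" where
  "msmult c M = (\<chi> i j. c * M $ i $ j)"

definition mat_subspace :: "(('a::field)^'n^'n) set \<Rightarrow> bool" where
  "mat_subspace V \<longleftrightarrow> 0 \<in> V \<and> (\<forall>P\<in>V. \<forall>Q\<in>V. P + Q \<in> V) \<and> (\<forall>c. \<forall>P\<in>V. msmult c P \<in> V)"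

definition lin_zariski_closed :: "(('a::field)^'n^'n) set \<Rightarrow> bool" where
  "lin_zariski_closed X \<longleftrightarrow> (\<exists>F. finite F \<and> (\<forall>V\<in>F. mat_subspace V) \<and> X = \<Union>F)"

inductive_set gen_semigroup :: "(('a::semiring_1)^'n^'n) set \<Rightarrow> ('a^'n^'n) set"
  for X where
    base: "P \<in> X \<Longrightarrow> P \<in> gen_semigroup X"
  | mult: "P \<in> gen_semigroup X \<Longrightarrow> Q \<in> gen_semigroup X \<Longrightarrow> P ** Q \<in> gen_semigroup X"

definition mat_im :: "('a::semiring_1)^'n^'n \<Rightarrow> ('a^'n) set" where
  "mat_im P = range (\<lambda>x. P *v x)"

definition mat_ker :: "('a::semiring_1)^'n^'n \<Rightarrow> ('a^'n) set" where
  "mat_ker P = {x. P *v x = 0}"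

definition compl_pseudo_regular :: "('a::field)^'n^'n \<Rightarrow> bool" where
  "compl_pseudo_regular C \<longleftrightarrow>
     (\<exists>G e. C \<in> G \<and> e \<in> G \<and> (\<forall>P\<in>G. \<forall>Q\<in>G. P ** Q \<in> G)
        \<and> (\<forall>P\<in>G. e ** P = P \<and> P ** e = P)
        \<and> (\<forall>P\<in>G. \<exists>Q\<in>G. P ** Q = e \<and> Q ** P = e))"

definition idem_of :: "('a::field)^'n^'n \<Rightarrow> 'a^'n^'n" where
  "idem_of C = (THE E. E ** E = E \<and> mat_im E = mat_im C \<and> mat_ker E = mat_ker C)"

definition mat_parallel :: "('a::semiring_1)^'n^'n \<Rightarrow> 'a^'n^'n \<Rightarrow> bool" where
  "mat_parallel P Q \<longleftrightarrow> mat_im P = mat_im Q \<and> mat_ker P = mat_ker Q"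

definition sim_rel :: "(('a::semiring_1)^'n^'n) set \<Rightarrow> 'a^'n^'n \<Rightarrow> 'a^'n^'n \<Rightarrow> bool" where
  "sim_rel S P Q \<longleftrightarrow> P \<in> S \<and> Q \<in> S \<and>
     (\<exists>C\<in>S \<union> {mat 1}. \<exists>D\<in>S \<union> {mat 1}. \<exists>C'\<in>S \<union> {mat 1}. \<exists>D'\<in>S \<union> {mat 1}.
        mat_parallel Q (D ** P ** C) \<and> mat_parallel P (D' ** Q ** C'))"

definition sim_class :: "(('a::semiring_1)^'n^'n) set \<Rightarrow> 'a^'n^'n \<Rightarrow> ('a^'n^'n) set" where
  "sim_class S P = {Q. sim_rel S P Q}"

end

theory Submission
  imports Defs "HOL-Analysis.Cartesian_Space"
begin

text \<open>
  Let \<open>e\<close> be the identity of a group containing \<open>A\<close>. As \<open>A \<sim> B\<close>, there are \<open>C', D'\<close> in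
  \<open>\<S> \<union> {I}\<close> with \<open>T = D' B C'\<close> parallel to \<open>A\<close>, hence to \<open>e\<close>; so \<open>T\<close> lies in the maximal
  subgroup at \<open>e\<close> and has a group inverse \<open>T\<^sup>#\<close>. Working in the corner ring \<open>e M\<^sub>d(K) e\<close>,
  where one-sided inverses are two-sided, one finds that \<open>C' T\<^sup># D'\<close> is an inner inverse
  of \<open>B\<close>: \<open>B C' T\<^sup># D' B = B\<close>.
  If \<open>B = B\<^sub>1 B\<^sub>2\<close>, put \<open>U = B\<^sub>2 C'\<close> and \<open>F = U A D' B\<^sub>1\<close>. Since \<open>T\<^sup># D' B\<^sub>1 U = e\<close>, the map
  \<open>X \<mapsto> U X T\<^sup># D' B\<^sub>1\<close> is a homomorphism from the maximal subgroup at \<open>e\<close> into the one at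
  \<open>U T\<^sup># D' B\<^sub>1\<close>; it sends \<open>A T\<close> to \<open>F\<close>, so \<open>F\<close> is completely pseudo-regular with
  \<open>E(F) = U T\<^sup># D' B\<^sub>1\<close>, and \<open>B\<^sub>1 E(F) B\<^sub>2 = B C' T\<^sup># D' B = B\<close>. Moreover \<open>F \<sim> A\<close>, as
  \<open>D' B\<^sub>1 F U = T A T\<close> is again in the maximal subgroup at \<open>e\<close>. Part (1) is the case where
  \<open>B\<^sub>1\<close> or \<open>B\<^sub>2\<close> is the identity.
\<close>

lemma matrix_add_rdistrib: "((A::'a::semiring_1^'n^'m) + B) ** C = A ** C + B ** C"
  by (vector matrix_matrix_mult_def sum.distrib[symmetric] field_simps)

lemma matrix_diff_ldistrib: "(A::'a::ring_1^'n^'m) ** (B - C) = A ** B - A ** C"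
  by (vector matrix_matrix_mult_def sum_subtractf[symmetric] field_simps)

lemma matrix_diff_rdistrib: "((A::'a::ring_1^'n^'m) - B) ** C = A ** C - B ** C"
  by (vector matrix_matrix_mult_def sum_subtractf[symmetric] field_simps)

lemma matrix_vector_mult_axis: "((P::'a::semiring_1^'n^'m) *v axis j 1) $ i = P $ i $ j"
  by (simp add: matrix_vector_mult_def axis_def if_distrib if_distribR sum.delta cong: if_cong)

lemma mat_im_mult_subset: "mat_im (P ** Q) \<subseteq> mat_im P"
  unfolding mat_im_def by (auto simp flip: matrix_vector_mul_assoc)

lemma mat_ker_mult_subset: "mat_ker Q \<subseteq> mat_ker (P ** Q)"
  unfolding mat_ker_def by (auto simp flip: matrix_vector_mul_assoc)

lemma mat_im_subset_factor:
  fixes P Q :: "'a::field^'n^'n"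
  assumes "mat_im P \<subseteq> mat_im Q"
  obtains N where "P = Q ** N"
proof -
  have "\<forall>j. \<exists>y. Q *v y = P *v axis j 1"
    using assms unfolding mat_im_def by (metis rangeE rangeI subsetD)
  then obtain y where y: "\<And>j. Q *v y j = P *v axis j 1" by metis
  have "P = Q ** (\<chi> i j. y j $ i)"
  proof (subst vec_eq_iff, intro allI, subst vec_eq_iff, intro allI)
    fix i j
    have "(Q ** (\<chi> i j. y j $ i)) $ i $ j = (Q *v y j) $ i"
      by (simp add: matrix_matrix_mult_def matrix_vector_mult_def)
    then show "P $ i $ j = (Q ** (\<chi> i j. y j $ i)) $ i $ j"
      by (simp add: y matrix_vector_mult_axis)
  qed
  then show thesis using that by blast
qed

lemma idempotent_im_subset_mult:
  fixes e P :: "'a::field^'n^'n"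
  assumes "e ** e = e" and "mat_im P \<subseteq> mat_im e"
  shows "e ** P = P"
proof -
  obtain N where "P = e ** N" using mat_im_subset_factor assms(2) by blast
  then show ?thesis using assms(1) by (metis matrix_mul_assoc)
qed

lemma idempotent_ker_subset_mult:
  fixes e P :: "'a::field^'n^'n"
  assumes "e ** e = e" and "mat_ker e \<subseteq> mat_ker P"
  shows "P ** e = P"
proof (rule matrix_eq[THEN iffD2], rule allI)
  fix x
  have "e *v (x - e *v x) = 0"
    by (simp add: matrix_vector_mult_diff_distrib matrix_vector_mul_assoc assms(1))
  then have "P *v (x - e *v x) = 0" using assms(2) unfolding mat_ker_def by auto
  then show "(P ** e) *v x = P *v x"
    by (simp add: matrix_vector_mult_diff_distrib matrix_vector_mul_assoc)
qed

lemma idempotents_parallel_eq: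
  fixes e f :: "'a::field^'n^'n"
  assumes "e ** e = e" "f ** f = f" "mat_parallel e f"
  shows "e = f"
proof -
  have "f ** e = e" using idempotent_im_subset_mult assms unfolding mat_parallel_def by blast
  moreover have "f ** e = f" using idempotent_ker_subset_mult assms unfolding mat_parallel_def by blast
  ultimately show ?thesis by simp
qed

lemma idem_of_eqI:
  fixes e P :: "'a::field^'n^'n"
  assumes "e ** e = e" "mat_parallel P e"
  shows "idem_of P = e"
  unfolding idem_of_def
proof (rule the_equality)
  show "e ** e = e \<and> mat_im e = mat_im P \<and> mat_ker e = mat_ker P"
    using assms unfolding mat_parallel_def by auto
next
  fix E assume "E ** E = E \<and> mat_im E = mat_im P \<and> mat_ker E = mat_ker P"
  then show "E = e" using idempotents_parallel_eq[of E e] assms unfolding mat_parallel_def by auto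
qed

text \<open>\<open>K + (I - e)\<close> and \<open>R + (I - e)\<close> are mutually inverse in \<open>M\<^sub>d(K)\<close>.\<close>
lemma corner_inverse_commute:
  fixes e K R :: "'a::field^'n^'n"
  assumes "e ** e = e" "K ** e = K" "e ** K = K" "R ** e = R" "e ** R = R" "K ** R = e"
  shows "R ** K = e"
proof -
  have "(K + (mat 1 - e)) ** (R + (mat 1 - e)) = mat 1"
    by (simp add: matrix_add_ldistrib matrix_add_rdistrib matrix_diff_ldistrib
        matrix_diff_rdistrib assms)
  then have "(R + (mat 1 - e)) ** (K + (mat 1 - e)) = mat 1"
    using matrix_left_right_inverse by blast
  then show ?thesis
    by (simp add: matrix_add_ldistrib matrix_add_rdistrib matrix_diff_ldistrib
        matrix_diff_rdistrib assms)
qed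

lemma corner_left_inverse:
  fixes e M R :: "'a::field^'n^'n"
  assumes "e ** e = e" "R ** e = R" "e ** R = R" "M ** R = e"
  shows "M ** e = e ** M ** e" and "R ** (M ** e) = e"
proof -
  let ?K = "e ** M ** e"
  have "?K ** R = e"
    using assms by (metis matrix_mul_assoc)
  then have RK: "R ** ?K = e"
    using corner_inverse_commute[of e ?K R] assms by (metis matrix_mul_assoc)
  have "M ** e = (M ** R) ** ?K" using RK by (metis matrix_mul_assoc)
  also have "\<dots> = ?K" using assms by (metis matrix_mul_assoc)
  finally show "M ** e = e ** M ** e" .
  then show "R ** (M ** e) = e" using RK by simp
qed

text \<open>Apply \<open>corner_left_inverse\<close> to \<open>M = D' D\<close> and \<open>R = A Y C' Tg\<close>.\<close>
lemma corner_inner_inverse: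
  fixes e A B D Y C' D' Tg :: "'a::field^'n^'n"
  assumes eA: "e ** A = A" and B: "B = D ** A ** Y"
    and T: "D' ** B ** C' ** Tg = e" and Tg: "Tg ** e = Tg"
  shows "B ** C' ** Tg ** D' ** B = B"
proof -
  let ?R = "A ** Y ** C' ** Tg"
  have eA': "e ** (A ** Z) = A ** Z" for Z
    by (simp add: eA matrix_mul_assoc)
  have "e ** e = D' ** B ** C' ** (Tg ** e)"
    using T by (simp add: matrix_mul_assoc)
  then have ee: "e ** e = e" using T Tg by simp
  have "?R ** e = ?R" "e ** ?R = ?R"
    by (simp_all add: Tg eA' flip: matrix_mul_assoc)
  moreover have "D' ** D ** ?R = e" using T B by (simp add: matrix_mul_assoc)
  ultimately have K: "D' ** D ** e = e ** (D' ** D) ** e" and RK: "?R ** (D' ** D ** e) = e"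
    using corner_left_inverse[OF ee] by blast+
  have DB: "D' ** B = (D' ** D ** e) ** A ** Y"
    using B by (simp add: eA' flip: matrix_mul_assoc)
  have BR: "D ** ?R ** D' ** B = B"
  proof -
    have "D ** ?R ** D' ** B = D ** ?R ** (D' ** B)" by (simp add: matrix_mul_assoc)
    also have "\<dots> = D ** (?R ** (D' ** D ** e)) ** A ** Y" unfolding DB by (simp add: matrix_mul_assoc)
    also have "\<dots> = D ** e ** A ** Y" using RK by simp
    also have "\<dots> = B" using B by (simp add: eA' flip: matrix_mul_assoc)
    finally show ?thesis .
  qed
  have "e ** (e ** (D' ** D) ** e) = e ** (D' ** D) ** e" by (simp add: ee matrix_mul_assoc)
  then have eK: "e ** (D' ** D ** e) = D' ** D ** e" by (simp only: K)
  have eDB: "e ** D' ** B = D' ** B"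
  proof -
    have "e ** D' ** B = e ** (D' ** B)" by (simp add: matrix_mul_assoc)
    also have "\<dots> = (e ** (D' ** D ** e)) ** A ** Y" unfolding DB by (simp add: matrix_mul_assoc)
    also have "\<dots> = D' ** B" unfolding eK DB ..
    finally show ?thesis .
  qed
  have "B ** C' ** Tg ** D' ** B = D ** ?R ** (D' ** B ** C' ** Tg) ** D' ** B"
    by (subst (1) BR[symmetric]) (simp add: matrix_mul_assoc)
  also have "\<dots> = D ** ?R ** (e ** D' ** B)" using T by (simp add: matrix_mul_assoc)
  also have "\<dots> = B" using eDB BR by (simp add: matrix_mul_assoc)
  finally show ?thesis .
qed

text \<open>Empty unless \<open>e\<close> is idempotent.\<close>
definition max_subgroup :: "'a::semiring_1^'n^'n \<Rightarrow> ('a^'n^'n) set" where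
  "max_subgroup e = {P. e ** P = P \<and> P ** e = P \<and>
     (\<exists>Q. e ** Q = Q \<and> Q ** e = Q \<and> P ** Q = e \<and> Q ** P = e)}"

lemma max_subgroup_idempotent:
  assumes "P \<in> max_subgroup e"
  shows "e ** e = e"
proof -
  obtain Q where "e ** P = P" "P ** Q = e" using assms unfolding max_subgroup_def by blast
  then have "e ** (P ** Q) = P ** Q" by (metis matrix_mul_assoc)
  then show ?thesis using \<open>P ** Q = e\<close> by simp
qed

lemma idempotent_in_max_subgroup: "e ** e = e \<Longrightarrow> e \<in> max_subgroup e"
  unfolding max_subgroup_def by blast

lemma max_subgroup_inverse:
  assumes "P \<in> max_subgroup e"
  obtains Q where "Q \<in> max_subgroup e" "P ** Q = e" "Q ** P = e"
  using assms unfolding max_subgroup_def by blast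

lemma max_subgroup_mult:
  assumes "P \<in> max_subgroup e" "Q \<in> max_subgroup e"
  shows "P ** Q \<in> max_subgroup e"
proof -
  obtain P' Q' where P: "e ** P = P" "P ** e = P" "e ** P' = P'" "P' ** e = P'" "P ** P' = e" "P' ** P = e"
    and Q: "e ** Q = Q" "Q ** e = Q" "e ** Q' = Q'" "Q' ** e = Q'" "Q ** Q' = e" "Q' ** Q = e"
    using assms unfolding max_subgroup_def by blast
  have "P ** Q ** (Q' ** P') = P ** (Q ** Q') ** P'" "Q' ** P' ** (P ** Q) = Q' ** (P' ** P) ** Q"
    by (simp_all add: matrix_mul_assoc)
  then have "P ** Q ** (Q' ** P') = e" "Q' ** P' ** (P ** Q) = e"
    using P Q by simp_all
  moreover have "e ** (P ** Q) = P ** Q" "e ** (Q' ** P') = Q' ** P'"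
    using P Q by (simp_all add: matrix_mul_assoc)
  moreover have "P ** Q ** e = P ** Q" "Q' ** P' ** e = Q' ** P'"
    using P Q by (simp_all flip: matrix_mul_assoc)
  ultimately show ?thesis unfolding max_subgroup_def by blast
qed

lemma compl_pseudo_regular_iff_max_subgroup:
  "compl_pseudo_regular (P::'a::field^'n^'n) \<longleftrightarrow> (\<exists>e. P \<in> max_subgroup e)"
proof
  assume "compl_pseudo_regular P"
  then obtain G e where "P \<in> G" "e \<in> G" "\<forall>P\<in>G. e ** P = P \<and> P ** e = P"
    "\<forall>P\<in>G. \<exists>Q\<in>G. P ** Q = e \<and> Q ** P = e"
    unfolding compl_pseudo_regular_def by blast
  then have "P \<in> max_subgroup e" unfolding max_subgroup_def by blast
  then show "\<exists>e. P \<in> max_subgroup e" ..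
next
  assume "\<exists>e. P \<in> max_subgroup e"
  then obtain e where P: "P \<in> max_subgroup e" ..
  have "e \<in> max_subgroup e"
    using idempotent_in_max_subgroup max_subgroup_idempotent[OF P] .
  moreover have "\<forall>P\<in>max_subgroup e. e ** P = P \<and> P ** e = P"
    unfolding max_subgroup_def by blast
  moreover have "\<forall>P\<in>max_subgroup e. \<exists>Q\<in>max_subgroup e. P ** Q = e \<and> Q ** P = e"
    by (metis max_subgroup_inverse)
  ultimately show "compl_pseudo_regular P"
    unfolding compl_pseudo_regular_def
    using P max_subgroup_mult by (intro exI[of _ "max_subgroup e"] exI[of _ e]) blast
qed

lemma max_subgroup_iff_parallel:
  fixes e P :: "'a::field^'n^'n"
  assumes ee: "e ** e = e"
  shows "P \<in> max_subgroup e \<longleftrightarrow> mat_parallel P e"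
proof
  assume "P \<in> max_subgroup e"
  then obtain Q where "e ** P = P" "P ** e = P" "P ** Q = e" "Q ** P = e"
    unfolding max_subgroup_def by blast
  then have "mat_im P \<subseteq> mat_im e" "mat_im e \<subseteq> mat_im P"
    "mat_ker P \<subseteq> mat_ker e" "mat_ker e \<subseteq> mat_ker P"
    using mat_im_mult_subset mat_ker_mult_subset by metis+
  then show "mat_parallel P e" unfolding mat_parallel_def by blast
next
  assume par: "mat_parallel P e"
  have eP: "e ** P = P" and Pe: "P ** e = P"
    using idempotent_im_subset_mult idempotent_ker_subset_mult ee par
    unfolding mat_parallel_def by blast+
  obtain R where "e = P ** R"
    using mat_im_subset_factor par unfolding mat_parallel_def by (metis order_refl)
  then have PR: "P ** (e ** R ** e) = e" using Pe ee by (metis matrix_mul_assoc)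
  have eR: "e ** (e ** R ** e) = e ** R ** e" "e ** R ** e ** e = e ** R ** e"
    using ee by (metis matrix_mul_assoc)+
  have "e ** R ** e ** P = e" using corner_inverse_commute[OF ee Pe eP eR(2,1) PR] .
  then show "P \<in> max_subgroup e" unfolding max_subgroup_def using eP Pe eR PR by blast
qed

lemma idem_of_max_subgroup:
  fixes e P :: "'a::field^'n^'n"
  assumes "P \<in> max_subgroup e"
  shows "idem_of P = e"
  using assms idem_of_eqI max_subgroup_iff_parallel max_subgroup_idempotent by blast

lemma max_subgroup_transfer:
  fixes e U W X :: "'a::field^'n^'n"
  assumes WU: "W ** U = e" and X: "X \<in> max_subgroup e"
  shows "U ** X ** W \<in> max_subgroup (U ** e ** W)"
proof -
  have ee: "e ** e = e" using max_subgroup_idempotent[OF X] .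
  obtain X' where X': "X' \<in> max_subgroup e" "X ** X' = e" "X' ** X = e"
    using max_subgroup_inverse[OF X] .
  have hom: "U ** P ** W ** (U ** Q ** W) = U ** (P ** Q) ** W"
    if "P ** e = P" for P Q using that WU by (metis matrix_mul_assoc)
  have unit: "U ** e ** W ** (U ** P ** W) = U ** P ** W" "U ** P ** W ** (U ** e ** W) = U ** P ** W"
    if "P \<in> max_subgroup e" for P
    using that hom[of e] hom[of P] ee unfolding max_subgroup_def by auto
  show ?thesis
    using unit[OF X] unit[OF X'(1)] hom[of X X'] hom[of X' X] X X'
    unfolding max_subgroup_def by auto
qed

lemma sim_rel_idem_factor:
  fixes S :: "('a::field^'n^'n) set"
  assumes mult_closed: "\<And>P Q. P \<in> S \<Longrightarrow> Q \<in> S \<Longrightarrow> P ** Q \<in> S"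
    and A: "compl_pseudo_regular A" and sim: "sim_rel S A B"
    and B1: "B1 \<in> S \<union> {mat 1}" and B2: "B2 \<in> S \<union> {mat 1}" and B: "B = B1 ** B2"
  shows "\<exists>F. compl_pseudo_regular F \<and> sim_rel S A F \<and> B1 ** idem_of F ** B2 = B"
proof -
  have mult_closed1: "P ** Q \<in> S \<union> {mat 1}" if "P \<in> S \<union> {mat 1}" "Q \<in> S \<union> {mat 1}" for P Q
    using that mult_closed by auto
  obtain C D C' D' where CD: "C \<in> S \<union> {mat 1}" "D \<in> S \<union> {mat 1}" "C' \<in> S \<union> {mat 1}" "D' \<in> S \<union> {mat 1}"
    and BA: "mat_parallel B (D ** A ** C)" and AT: "mat_parallel A (D' ** B ** C')" and AS: "A \<in> S"
    using sim unfolding sim_rel_def by blast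
  obtain e where Ae: "A \<in> max_subgroup e"
    using A compl_pseudo_regular_iff_max_subgroup by blast
  have ee: "e ** e = e" using max_subgroup_idempotent[OF Ae] .
  define T where "T = D' ** B ** C'"
  have T: "T \<in> max_subgroup e"
    using AT Ae unfolding T_def max_subgroup_iff_parallel[OF ee] mat_parallel_def by simp
  then obtain Tg where Tg: "Tg \<in> max_subgroup e" "T ** Tg = e" "Tg ** T = e"
    by (rule max_subgroup_inverse)
  obtain N where "B = D ** A ** C ** N"
    using mat_im_subset_factor BA unfolding mat_parallel_def by blast
  then have "B = D ** A ** (C ** N)" by (simp add: matrix_mul_assoc)
  then have inner: "B ** C' ** Tg ** D' ** B = B"
    using corner_inner_inverse Ae Tg unfolding T_def max_subgroup_def by blast
  define U where "U = B2 ** C'"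
  define V where "V = D' ** B1"
  define F where "F = U ** A ** V"
  have "Tg ** V ** U = e" using Tg(3) unfolding T_def U_def V_def B by (simp add: matrix_mul_assoc)
  then have "U ** (A ** T) ** (Tg ** V) \<in> max_subgroup (U ** e ** (Tg ** V))"
    using max_subgroup_transfer max_subgroup_mult[OF Ae T] by blast
  moreover have "U ** (A ** T) ** (Tg ** V) = U ** (A ** (T ** Tg)) ** V"
    "U ** e ** (Tg ** V) = U ** (e ** Tg) ** V"
    by (simp_all add: matrix_mul_assoc)
  moreover have "A ** (T ** Tg) = A" "e ** Tg = Tg"
    using Tg Ae unfolding max_subgroup_def by simp_all
  ultimately have F: "F \<in> max_subgroup (U ** Tg ** V)" unfolding F_def by simp
  have "V ** F ** U = T ** A ** T"
    unfolding F_def T_def U_def V_def B by (simp add: matrix_mul_assoc)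
  then have "mat_parallel A (V ** F ** U)"
    using max_subgroup_mult[OF max_subgroup_mult[OF T Ae] T] Ae
    unfolding max_subgroup_iff_parallel[OF ee] mat_parallel_def by simp
  moreover have "U \<in> S \<union> {mat 1}" "V \<in> S \<union> {mat 1}"
    unfolding U_def V_def using mult_closed1 CD B1 B2 by auto
  moreover have "F \<in> S"
    unfolding F_def using \<open>U \<in> S \<union> {mat 1}\<close> \<open>V \<in> S \<union> {mat 1}\<close> AS mult_closed by auto
  moreover have "mat_parallel F (U ** A ** V)" unfolding F_def mat_parallel_def by simp
  ultimately have "sim_rel S A F" unfolding sim_rel_def using AS by blast
  moreover have "B1 ** idem_of F ** B2 = B"
    using idem_of_max_subgroup[OF F] inner unfolding U_def V_def B by (simp add: matrix_mul_assoc)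
  moreover have "compl_pseudo_regular F" using F compl_pseudo_regular_iff_max_subgroup by blast
  ultimately show ?thesis by blast
qed

theorem lemmaV11:
  fixes X :: "(('a::field_char_0)^'n^'n) set" and A B :: "'a^'n^'n"
  assumes "number_field TYPE('a)"
    and "lin_zariski_closed X"
    and "A \<in> gen_semigroup X"
    and "compl_pseudo_regular A"
    and "B \<in> sim_class (gen_semigroup X) A"
  shows "(\<exists>C D. compl_pseudo_regular C \<and> compl_pseudo_regular D
            \<and> C \<in> sim_class (gen_semigroup X) A \<and> D \<in> sim_class (gen_semigroup X) A
            \<and> B = idem_of D ** B \<and> B = B ** idem_of C)
       \<and> (\<forall>B1 B2. B1 \<in> gen_semigroup X \<longrightarrow> B2 \<in> gen_semigroup X \<longrightarrow> B = B1 ** B2 \<longrightarrow>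
            (\<exists>C. compl_pseudo_regular C \<and> C \<in> sim_class (gen_semigroup X) A
                 \<and> B1 ** B2 = B1 ** idem_of C ** B2))"
proof -
  let ?S = "gen_semigroup X"
  have sim: "sim_rel ?S A B" using assms(5) unfolding sim_class_def by simp
  note factor = sim_rel_idem_factor[OF gen_semigroup.mult assms(4) sim]
  have "B \<in> ?S" using sim unfolding sim_rel_def by simp
  then obtain C D where "compl_pseudo_regular C" "sim_rel ?S A C" "B ** idem_of C ** mat 1 = B"
    "compl_pseudo_regular D" "sim_rel ?S A D" "mat 1 ** idem_of D ** B = B"
    using factor[of B "mat 1"] factor[of "mat 1" B] by auto
  then show ?thesis
  proof (intro conjI allI impI)
    fix B1 B2 assume "B1 \<in> ?S" "B2 \<in> ?S" "B = B1 ** B2"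
    then show "\<exists>C. compl_pseudo_regular C \<and> C \<in> sim_class ?S A \<and> B1 ** B2 = B1 ** idem_of C ** B2"
      using factor[of B1 B2] unfolding sim_class_def by auto
  qed (unfold sim_class_def mem_Collect_eq, intro exI[of _ C] exI[of _ D], auto)
qed

end
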